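(* Let $\kappa>0$ and consider one of the following reference solutions $t\mapsto e^{i\omega t}U_*$ of the system (H): (i) $\tau=-1$: $U_*=\frac{1}{\sqrt2}(1,-1)$, $\omega=\frac\kappa2-2$ (any $\kappa>0$); (ii) $\tau=+1$ and $0<\kappa<2$: $U_*=\frac{1}{\sqrt2}(1,1)$, $\omega=\frac\kappa2$; (iii) $\kappa>2$ and $\tau\in\{+1,-1\}$: $U_*=(\alpha_\tau,\beta_\tau)$, $\omega=\kappa-1$. Then in each case the reference solution is spectrally stable and orbitally stable.
   Context: Let $\kappa>0$. System (H) is the ODE system for $u=(u_0,u_1):\mathbb R\to\mathbb C^2$: $i u_0'=u_0-u_1-\kappa|u_0|^2u_0$, $\; i u_1'=u_1-u_0-\kappa|u_1|^2u_1$. For $\kappa>2$ and $\tau\in\{\pm1\}$ set $\alpha_\tau=\frac{\sqrt{\kappa+2}-\tau\sqrt{\kappa-2}}{2\sqrt\kappa}$, $\beta_\tau=\frac{\sqrt{\kappa+2}+\tau\sqrt{\kappa-2}}{2\sqrt\kappa}$. For real $U_*=(U_{*0},U_{*1})$ with $|U_{*0}|^2+|U_{*1}|^2=1$ and $\omega$ as listed, $t\mapsto e^{i\omega t}U_*$ solves (H). Linearization: writing $u_j=e^{i\omega t}(U_{*j}+v_j)$ and keeping linear terms gives $i v_j'=(1+\omega-\kappa U_{*j}^2)v_j-v_{1-j}-2\kappa U_{*j}^2\,\mathrm{Re}(v_j)$, $j=0,1$; with $v_j=q_j+ip_j$ this is $X'=\mathbb L X$ for $X=(q_0,p_0,q_1,p_1)\in\mathbb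 R^4$ and a real $4\times4$ matrix $\mathbb L$. The reference solution is spectrally stable if every eigenvalue of $\mathbb L$ has nonpositive real part, spectrally unstable otherwise. The reference solution is orbitally stable if for every $\epsilon>0$ there is $\delta>0$ such that every solution $u$ of (H) with $|u(0)-U_*|\le\delta$ satisfies $\inf_{\theta\in\mathbb R}|u(t)-e^{i\theta}U_*|\le\epsilon$ for all $t\ge0$; orbitally unstable otherwise. *)

theory Defs
  imports "HOL-Analysis.Analysis"
begin

text \<open>C^2 is modelled as complex \<times> complex, whose norm is the Euclidean norm.\<close>
definition solves_H :: "real \<Rightarrow> (real \<Rightarrow> complex \<times> complex) \<Rightarrow> bool" where
  "solves_H \<kappa> u \<longleftrightarrow> (\<forall>t. \<exists>d. (u has_vector_derivative d) (at t) \<and>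
      \<i> * fst d = fst (u t) - snd (u t) - complex_of_real (\<kappa> * (cmod (fst (u t)))\<^sup>2) * fst (u t) \<and>
      \<i> * snd d = snd (u t) - fst (u t) - complex_of_real (\<kappa> * (cmod (snd (u t)))\<^sup>2) * snd (u t))"

definition alpha :: "real \<Rightarrow> real \<Rightarrow> real" where
  "alpha \<kappa> \<tau> = (sqrt (\<kappa> + 2) - \<tau> * sqrt (\<kappa> - 2)) / (2 * sqrt \<kappa>)"

definition beta :: "real \<Rightarrow> real \<Rightarrow> real" where
  "beta \<kappa> \<tau> = (sqrt (\<kappa> + 2) + \<tau> * sqrt (\<kappa> - 2)) / (2 * sqrt \<kappa>)"

definition lin_rhs :: "real \<Rightarrow> real \<Rightarrow> real \<times> real \<Rightarrow> complex \<times> complex \<Rightarrow> complex \<times> complex" where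
  "lin_rhs \<kappa> \<omega> U v =
     (complex_of_real (1 + \<omega> - \<kappa> * (fst U)\<^sup>2) * fst v - snd v
        - complex_of_real (2 * \<kappa> * (fst U)\<^sup>2 * Re (fst v)),
      complex_of_real (1 + \<omega> - \<kappa> * (snd U)\<^sup>2) * snd v - fst v
        - complex_of_real (2 * \<kappa> * (snd U)\<^sup>2 * Re (snd v)))"

definition to_X :: "complex \<times> complex \<Rightarrow> real^4" where
  "to_X v = vector [Re (fst v), Im (fst v), Re (snd v), Im (snd v)]"

definition from_X :: "real^4 \<Rightarrow> complex \<times> complex" where
  "from_X X = (Complex (X$1) (X$2), Complex (X$3) (X$4))"

text \<open>The real 4x4 matrix L with X' = L X  (v' = -i G(v), written in real coordinates).\<close>
definition linL :: "real \<Rightarrow> real \<Rightarrow> real \<times> real \<Rightarrow> real^4^4" where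
  "linL \<kappa> \<omega> U = matrix (\<lambda>X. to_X (let w = lin_rhs \<kappa> \<omega> U (from_X X) in (- \<i> * fst w, - \<i> * snd w)))"

definition eigenvalue_real_matrix :: "real^'n^'n \<Rightarrow> complex \<Rightarrow> bool" where
  "eigenvalue_real_matrix A \<mu> \<longleftrightarrow>
     (\<exists>v::complex^'n. v \<noteq> 0 \<and> (map_matrix complex_of_real A) *v v = \<mu> *s v)"

definition spectrally_stable :: "real \<Rightarrow> real \<Rightarrow> real \<times> real \<Rightarrow> bool" where
  "spectrally_stable \<kappa> \<omega> U \<longleftrightarrow>
     (\<forall>\<mu>. eigenvalue_real_matrix (linL \<kappa> \<omega> U) \<mu> \<longrightarrow> Re \<mu> \<le> 0)"

definition cvec :: "real \<times> real \<Rightarrow> complex \<times> complex" where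
  "cvec U = (complex_of_real (fst U), complex_of_real (snd U))"

definition orbitally_stable :: "real \<Rightarrow> real \<times> real \<Rightarrow> bool" where
  "orbitally_stable \<kappa> U \<longleftrightarrow>
     (\<forall>\<epsilon>>0. \<exists>\<delta>>0. \<forall>u. solves_H \<kappa> u \<and> norm (u 0 - cvec U) \<le> \<delta> \<longrightarrow>
        (\<forall>t\<ge>0. (INF \<theta>::real. norm (u t - (cis \<theta> * fst (cvec U), cis \<theta> * snd (cvec U)))) \<le> \<epsilon>))"

end

theory Submission
  imports Defs
begin

text \<open>Everything is expressed through the Stokes parameters of a state: the mass
  \<open>N = |u0|\<^sup>2 + |u1|\<^sup>2\<close>, \<open>X + i Y = 2 u0 conj u1\<close> and \<open>Z = |u0|\<^sup>2 - |u1|\<^sup>2\<close>, with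
  \<open>X\<^sup>2 + Y\<^sup>2 + Z\<^sup>2 = N\<^sup>2\<close>. The flow of (H) conserves \<open>N\<close> and \<open>X + \<kappa> Z\<^sup>2/4\<close>.

  Spectral stability: the phase symmetry gives the linearization a zero mode, so the square of an
  eigenvalue is \<open>0\<close> or \<open>- T\<close> with \<open>T \<ge> 0\<close>, and every eigenvalue is purely imaginary.

  Orbital stability: the distance to the orbit of \<open>U\<close> is a continuous function of \<open>(N, X, Y)\<close> as long as
  \<open>Z\<close> keeps the sign of \<open>U0\<^sup>2 - U1\<^sup>2\<close>. In each case a combination of the two conserved quantities
  vanishes at \<open>U\<close> and bounds \<open>(N - 1)\<^sup>2 + (X - 2 U0 U1)\<^sup>2 + Y\<^sup>2\<close> from above, so \<open>(N, X, Y)\<close> stays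
  near its value at \<open>U\<close> for all time; by continuity of the solution \<open>Z\<close> then cannot change sign.\<close>

section \<open>Stokes parameters and conservation laws\<close>

definition mass :: "complex \<times> complex \<Rightarrow> real" where
  "mass p = (cmod (fst p))\<^sup>2 + (cmod (snd p))\<^sup>2"

definition stokes_x :: "complex \<times> complex \<Rightarrow> real" where
  "stokes_x p = 2 * Re (fst p * cnj (snd p))"

definition stokes_y :: "complex \<times> complex \<Rightarrow> real" where
  "stokes_y p = 2 * Im (fst p * cnj (snd p))"

definition stokes_z :: "complex \<times> complex \<Rightarrow> real" where
  "stokes_z p = (cmod (fst p))\<^sup>2 - (cmod (snd p))\<^sup>2"

text \<open>The Hamiltonian of (H) is \<open>mass p - \<kappa> * (mass p)\<^sup>2 / 4 - energy \<kappa> p\<close>.\<close>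

definition energy :: "real \<Rightarrow> complex \<times> complex \<Rightarrow> real" where
  "energy \<kappa> p = stokes_x p + \<kappa> * (stokes_z p)\<^sup>2 / 4"

lemmas stokes_defs = mass_def stokes_x_def stokes_y_def stokes_z_def

lemma stokes_real_coords:
  "mass p = (Re (fst p))\<^sup>2 + (Im (fst p))\<^sup>2 + (Re (snd p))\<^sup>2 + (Im (snd p))\<^sup>2"
  "stokes_x p = 2 * (Re (fst p) * Re (snd p) + Im (fst p) * Im (snd p))"
  "stokes_y p = 2 * (Im (fst p) * Re (snd p) - Re (fst p) * Im (snd p))"
  "stokes_z p = (Re (fst p))\<^sup>2 + (Im (fst p))\<^sup>2 - (Re (snd p))\<^sup>2 - (Im (snd p))\<^sup>2"
  by (simp_all add: stokes_defs cmod_power2)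

lemma stokes_sum_sq: "(stokes_x p)\<^sup>2 + (stokes_y p)\<^sup>2 + (stokes_z p)\<^sup>2 = (mass p)\<^sup>2"
  unfolding stokes_real_coords by (simp add: power2_eq_square algebra_simps)

lemma stokes_cvec:
  "mass (cvec (U0, U1)) = U0\<^sup>2 + U1\<^sup>2" "stokes_x (cvec (U0, U1)) = 2 * U0 * U1"
  "stokes_y (cvec (U0, U1)) = 0" "stokes_z (cvec (U0, U1)) = U0\<^sup>2 - U1\<^sup>2"
  by (simp_all add: stokes_defs cvec_def)

lemma continuous_stokes [continuous_intros]:
  assumes "continuous F f"
  shows "continuous F (\<lambda>x. mass (f x))" and "continuous F (\<lambda>x. stokes_x (f x))"
    and "continuous F (\<lambda>x. stokes_y (f x))" and "continuous F (\<lambda>x. stokes_z (f x))"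
  unfolding stokes_real_coords
  by (intro continuous_intros continuous_Re continuous_Im continuous_fst continuous_snd assms)+

lemma continuous_on_stokes_z [continuous_intros]:
  "continuous_on S f \<Longrightarrow> continuous_on S (\<lambda>x. stokes_z (f x))"
  unfolding stokes_real_coords by (intro continuous_intros)

lemma mass_nonneg: "mass p \<ge> 0"
  by (simp add: mass_def)

lemma solves_H_continuous: "solves_H \<kappa> u \<Longrightarrow> continuous_on S u"
  unfolding solves_H_def
  by (meson continuous_at_imp_continuous_on has_vector_derivative_continuous)

lemma solves_H_real_form:
  assumes "solves_H \<kappa> u"
  defines "q0 \<equiv> \<lambda>t. Re (fst (u t))" and "p0 \<equiv> \<lambda>t. Im (fst (u t))"
    and "q1 \<equiv> \<lambda>t. Re (snd (u t))" and "p1 \<equiv> \<lambda>t. Im (snd (u t))"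
  shows "(q0 has_real_derivative p0 t - p1 t - \<kappa> * ((q0 t)\<^sup>2 + (p0 t)\<^sup>2) * p0 t) (at t)"
    and "(p0 has_real_derivative q1 t - q0 t + \<kappa> * ((q0 t)\<^sup>2 + (p0 t)\<^sup>2) * q0 t) (at t)"
    and "(q1 has_real_derivative p1 t - p0 t - \<kappa> * ((q1 t)\<^sup>2 + (p1 t)\<^sup>2) * p1 t) (at t)"
    and "(p1 has_real_derivative q0 t - q1 t + \<kappa> * ((q1 t)\<^sup>2 + (p1 t)\<^sup>2) * q1 t) (at t)"
proof -
  obtain d where d: "(u has_vector_derivative d) (at t)"
    and e0: "\<i> * fst d = fst (u t) - snd (u t) - complex_of_real (\<kappa> * (cmod (fst (u t)))\<^sup>2) * fst (u t)"
    and e1: "\<i> * snd d = snd (u t) - fst (u t) - complex_of_real (\<kappa> * (cmod (snd (u t)))\<^sup>2) * snd (u t)"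
    using assms(1) unfolding solves_H_def by blast
  have component: "((\<lambda>t. f (u t)) has_real_derivative f d) (at t)" if "bounded_linear f" for f
    using bounded_linear.has_vector_derivative[OF that d]
    by (simp add: has_real_derivative_iff_has_vector_derivative)
  have fst_d: "Re (fst d) = p0 t - p1 t - \<kappa> * ((q0 t)\<^sup>2 + (p0 t)\<^sup>2) * p0 t"
      "Im (fst d) = q1 t - q0 t + \<kappa> * ((q0 t)\<^sup>2 + (p0 t)\<^sup>2) * q0 t"
    using arg_cong[OF e0, of Re] arg_cong[OF e0, of Im]
    by (simp_all add: q0_def p0_def q1_def p1_def cmod_power2)
  have snd_d: "Re (snd d) = p1 t - p0 t - \<kappa> * ((q1 t)\<^sup>2 + (p1 t)\<^sup>2) * p1 t"
      "Im (snd d) = q0 t - q1 t + \<kappa> * ((q1 t)\<^sup>2 + (p1 t)\<^sup>2) * q1 t"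
    using arg_cong[OF e1, of Re] arg_cong[OF e1, of Im]
    by (simp_all add: q0_def p0_def q1_def p1_def cmod_power2)
  have "(q0 has_real_derivative Re (fst d)) (at t)" "(p0 has_real_derivative Im (fst d)) (at t)"
    "(q1 has_real_derivative Re (snd d)) (at t)" "(p1 has_real_derivative Im (snd d)) (at t)"
    unfolding q0_def p0_def q1_def p1_def
    by (intro component bounded_linear_compose[OF bounded_linear_Re] bounded_linear_compose[OF bounded_linear_Im]
        bounded_linear_fst bounded_linear_snd)+
  then show "(q0 has_real_derivative p0 t - p1 t - \<kappa> * ((q0 t)\<^sup>2 + (p0 t)\<^sup>2) * p0 t) (at t)"
    and "(p0 has_real_derivative q1 t - q0 t + \<kappa> * ((q0 t)\<^sup>2 + (p0 t)\<^sup>2) * q0 t) (at t)"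
    and "(q1 has_real_derivative p1 t - p0 t - \<kappa> * ((q1 t)\<^sup>2 + (p1 t)\<^sup>2) * p1 t) (at t)"
    and "(p1 has_real_derivative q0 t - q1 t + \<kappa> * ((q1 t)\<^sup>2 + (p1 t)\<^sup>2) * q1 t) (at t)"
    by (simp_all only: fst_d snd_d)
qed

lemma solves_H_conservation:
  assumes "solves_H \<kappa> u"
  shows "mass (u t) = mass (u 0)" and "energy \<kappa> (u t) = energy \<kappa> (u 0)"
proof -
  define q0 p0 q1 p1 where "q0 t = Re (fst (u t))" and "p0 t = Im (fst (u t))"
    and "q1 t = Re (snd (u t))" and "p1 t = Im (snd (u t))" for t
  note real_form = solves_H_real_form[OF assms, folded q0_def p0_def q1_def p1_def]
  have coords: "Re (fst (u t)) = q0 t" "Im (fst (u t)) = p0 t"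
    "Re (snd (u t)) = q1 t" "Im (snd (u t)) = p1 t" for t
    by (simp_all add: q0_def p0_def q1_def p1_def)
  have "((\<lambda>t. mass (u t)) has_real_derivative 0) (at t)" for t
    unfolding stokes_real_coords coords
    by (auto intro!: derivative_eq_intros real_form simp: algebra_simps power2_eq_square)
  then show "mass (u t) = mass (u 0)"
    using DERIV_isconst_all[of "\<lambda>t. mass (u t)"] by blast
  have "((\<lambda>t. energy \<kappa> (u t)) has_real_derivative 0) (at t)" for t
    unfolding energy_def stokes_real_coords coords
    by (auto intro!: derivative_eq_intros real_form simp: field_simps power2_eq_square)
  then show "energy \<kappa> (u t) = energy \<kappa> (u 0)"
    using DERIV_isconst_all[of "\<lambda>t. energy \<kappa> (u t)"] by blast
qed

section \<open>Distance to the orbit\<close>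

lemma cmod_projection_sq:
  "(cmod (of_real U0 * fst p + of_real U1 * snd p))\<^sup>2
     = ((U0\<^sup>2 + U1\<^sup>2) * mass p + 2 * U0 * U1 * stokes_x p + (U0\<^sup>2 - U1\<^sup>2) * stokes_z p) / 2"
  unfolding stokes_real_coords cmod_power2 by (simp add: power2_eq_square field_simps)

lemma orbit_distance_le:
  assumes U: "U0\<^sup>2 + U1\<^sup>2 = 1"
  shows "(INF \<theta>. norm (p - (cis \<theta> * fst (cvec (U0, U1)), cis \<theta> * snd (cvec (U0, U1)))))
           \<le> sqrt (mass p + 1 - 2 * cmod (of_real U0 * fst p + of_real U1 * snd p))"
proof -
  define w where "w = of_real U0 * fst p + of_real U1 * snd p"
  define \<theta> where "\<theta> = Arg w"
  have aligned: "cos \<theta> * Re w + sin \<theta> * Im w = cmod w"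
  proof -
    have polar: "w = of_real (cmod w) * cis \<theta>"
      using rcis_cmod_Arg[of w] by (simp add: \<theta>_def rcis_def)
    have "Re w = cmod w * cos \<theta>" "Im w = cmod w * sin \<theta>"
      using arg_cong[OF polar, of Re] arg_cong[OF polar, of Im] by simp_all
    then show ?thesis
      by (simp add: algebra_simps flip: distrib_left power2_eq_square)
  qed
  have "(norm (p - (cis \<theta> * fst (cvec (U0, U1)), cis \<theta> * snd (cvec (U0, U1)))))\<^sup>2
      = mass p + (U0\<^sup>2 + U1\<^sup>2) - 2 * (cos \<theta> * Re w + sin \<theta> * Im w)"
    by (cases p) (simp add: norm_Pair cvec_def cmod_power2 stokes_real_coords w_def cis.ctr,
        simp add: power2_eq_square algebra_simps cos_squared_eq[unfolded power2_eq_square])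
  also have "\<dots> = mass p + 1 - 2 * cmod w"
    using U aligned by simp
  finally have "norm (p - (cis \<theta> * fst (cvec (U0, U1)), cis \<theta> * snd (cvec (U0, U1))))
      = sqrt (mass p + 1 - 2 * cmod w)"
    by (metis norm_ge_zero real_sqrt_unique)
  moreover have "(INF \<theta>. norm (p - (cis \<theta> * fst (cvec (U0, U1)), cis \<theta> * snd (cvec (U0, U1)))))
      \<le> norm (p - (cis \<theta> * fst (cvec (U0, U1)), cis \<theta> * snd (cvec (U0, U1))))"
    by (rule cINF_lower) (auto intro: bdd_belowI[where m = 0])
  ultimately show ?thesis
    unfolding w_def by simp
qed

text \<open>The squared distance from \<open>p\<close> to the orbit of \<open>(U0, U1)\<close>, written in terms of
  \<open>v = (mass p, stokes_x p, stokes_y p)\<close>; valid when \<open>stokes_z p\<close> has the sign of \<open>U0\<^sup>2 - U1\<^sup>2\<close>.\<close>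

definition orbit_gap :: "real \<Rightarrow> real \<Rightarrow> real \<times> real \<times> real \<Rightarrow> real" where
  "orbit_gap U0 U1 v = fst v + 1 - sqrt (2 * (fst v + 2 * U0 * U1 * fst (snd v)
      + \<bar>U0\<^sup>2 - U1\<^sup>2\<bar> * sqrt ((fst v)\<^sup>2 - (fst (snd v))\<^sup>2 - (snd (snd v))\<^sup>2)))"

lemma isCont_orbit_gap: "isCont (orbit_gap U0 U1) v"
  unfolding orbit_gap_def[abs_def] by (intro continuous_intros)

lemma orbit_gap_reference:
  assumes "U0\<^sup>2 + U1\<^sup>2 = 1"
  shows "orbit_gap U0 U1 (1, 2 * U0 * U1, 0) = 0"
proof -
  have "(2 * U0 * U1)\<^sup>2 + (U0\<^sup>2 - U1\<^sup>2)\<^sup>2 = (U0\<^sup>2 + U1\<^sup>2)\<^sup>2"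
    by (simp add: power2_eq_square algebra_simps)
  then have unit: "(2 * U0 * U1)\<^sup>2 + (U0\<^sup>2 - U1\<^sup>2)\<^sup>2 = 1"
    using assms by simp
  then have "sqrt (1 - (2 * U0 * U1)\<^sup>2) = \<bar>U0\<^sup>2 - U1\<^sup>2\<bar>"
    by (metis add_diff_cancel_left' real_sqrt_abs)
  then have "orbit_gap U0 U1 (1, 2 * U0 * U1, 0)
      = 2 - sqrt (2 * (1 + ((2 * U0 * U1)\<^sup>2 + (U0\<^sup>2 - U1\<^sup>2)\<^sup>2)))"
    by (simp add: orbit_gap_def power2_eq_square)
  then show ?thesis
    using unit by simp
qed

lemma orbit_distance_le_gap:
  assumes U: "U0\<^sup>2 + U1\<^sup>2 = 1" and sign: "(U0\<^sup>2 - U1\<^sup>2) * stokes_z p \<ge> 0"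
  shows "(INF \<theta>. norm (p - (cis \<theta> * fst (cvec (U0, U1)), cis \<theta> * snd (cvec (U0, U1)))))
           \<le> sqrt (orbit_gap U0 U1 (mass p, stokes_x p, stokes_y p))"
proof -
  define w where "w = of_real U0 * fst p + of_real U1 * snd p"
  have "\<bar>U0\<^sup>2 - U1\<^sup>2\<bar> * sqrt ((mass p)\<^sup>2 - (stokes_x p)\<^sup>2 - (stokes_y p)\<^sup>2)
      = (U0\<^sup>2 - U1\<^sup>2) * stokes_z p"
  proof -
    have "(mass p)\<^sup>2 - (stokes_x p)\<^sup>2 - (stokes_y p)\<^sup>2 = (stokes_z p)\<^sup>2"
      using stokes_sum_sq[of p] by simp
    then show ?thesis
      using sign by (simp flip: abs_mult)
  qed
  then have "sqrt (2 * (mass p + 2 * U0 * U1 * stokes_x p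
      + \<bar>U0\<^sup>2 - U1\<^sup>2\<bar> * sqrt ((mass p)\<^sup>2 - (stokes_x p)\<^sup>2 - (stokes_y p)\<^sup>2))) = sqrt (4 * (cmod w)\<^sup>2)"
    using cmod_projection_sq[of U0 p U1] U by (simp add: w_def)
  also have "\<dots> = 2 * cmod w"
    by (simp add: real_sqrt_mult)
  finally show ?thesis
    using orbit_distance_le[OF U, of p] by (simp add: orbit_gap_def w_def)
qed

lemma solves_H_stokes_z_keeps_sign:
  assumes "solves_H \<kappa> u" and nonzero: "\<And>s. stokes_z (u s) \<noteq> 0" and "0 \<le> t"
  shows "stokes_z (u t) * stokes_z (u 0) > 0"
proof (rule ccontr)
  assume "\<not> ?thesis"
  moreover have "continuous_on {0..t} (\<lambda>s. stokes_z (u s) * stokes_z (u 0))"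
    by (intro continuous_intros solves_H_continuous[OF assms(1)])
  moreover have "stokes_z (u 0) * stokes_z (u 0) > 0"
    using nonzero[of 0] by (auto simp: zero_less_mult_iff linorder_neq_iff)
  ultimately obtain s where "stokes_z (u s) * stokes_z (u 0) = 0"
    using IVT2'[of "\<lambda>s. stokes_z (u s) * stokes_z (u 0)" t 0 0] \<open>0 \<le> t\<close> by force
  then show False
    using nonzero by simp
qed

section \<open>Orbital stability from a bound on the Stokes parameters\<close>

lemma isCont_eventually_less:
  fixes f :: "'a::t2_space \<Rightarrow> 'b::linorder_topology"
  shows "isCont f x \<Longrightarrow> f x < b \<Longrightarrow> eventually (\<lambda>y. f y < b) (nhds x)"
  by (metis isCont_def tendsto_at_iff_tendsto_nhds order_tendstoD(2))

lemma isCont_eventually_greater: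
  fixes f :: "'a::t2_space \<Rightarrow> 'b::linorder_topology"
  shows "isCont f x \<Longrightarrow> b < f x \<Longrightarrow> eventually (\<lambda>y. b < f y) (nhds x)"
  by (metis isCont_def tendsto_at_iff_tendsto_nhds order_tendstoD(1))

definition stokes_deviation :: "real \<Rightarrow> real \<Rightarrow> complex \<times> complex \<Rightarrow> real" where
  "stokes_deviation U0 U1 p = (mass p - 1)\<^sup>2 + (stokes_x p - 2 * U0 * U1)\<^sup>2 + (stokes_y p)\<^sup>2"

lemma dist_stokes_reference:
  "dist (mass p, stokes_x p, stokes_y p) (1, 2 * U0 * U1, 0) = sqrt (stokes_deviation U0 U1 p)"
  by (simp add: stokes_deviation_def dist_Pair_Pair dist_real_def)

lemma orbit_distance_small_if_stokes_close:
  assumes U: "U0\<^sup>2 + U1\<^sup>2 = 1" and "\<epsilon> > 0"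
  obtains \<eta> where "\<eta> > 0" and "\<And>p. stokes_deviation U0 U1 p < \<eta>\<^sup>2 \<Longrightarrow> (U0\<^sup>2 - U1\<^sup>2) * stokes_z p \<ge> 0 \<Longrightarrow>
      (INF \<theta>. norm (p - (cis \<theta> * fst (cvec (U0, U1)), cis \<theta> * snd (cvec (U0, U1))))) < \<epsilon>"
proof -
  have "orbit_gap U0 U1 (1, 2 * U0 * U1, 0) < \<epsilon>\<^sup>2"
    using orbit_gap_reference[OF U] \<open>\<epsilon> > 0\<close> by simp
  from isCont_eventually_less[OF isCont_orbit_gap this]
  obtain \<eta> where "\<eta> > 0" and \<eta>: "\<And>v. dist v (1, 2 * U0 * U1, 0) < \<eta> \<Longrightarrow> orbit_gap U0 U1 v < \<epsilon>\<^sup>2"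
    unfolding eventually_nhds_metric by blast
  show ?thesis
  proof (rule that[OF \<open>\<eta> > 0\<close>])
    fix p
    assume "stokes_deviation U0 U1 p < \<eta>\<^sup>2" and sign: "(U0\<^sup>2 - U1\<^sup>2) * stokes_z p \<ge> 0"
    then have "dist (mass p, stokes_x p, stokes_y p) (1, 2 * U0 * U1, 0) < \<eta>"
      unfolding dist_stokes_reference using \<open>\<eta> > 0\<close> by (intro real_less_lsqrt) auto
    then have "sqrt (orbit_gap U0 U1 (mass p, stokes_x p, stokes_y p)) < \<epsilon>"
      using \<eta> \<open>\<epsilon> > 0\<close> by (intro real_less_lsqrt) auto
    then show "(INF \<theta>. norm (p - (cis \<theta> * fst (cvec (U0, U1)), cis \<theta> * snd (cvec (U0, U1))))) < \<epsilon>"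
      using orbit_distance_le_gap[OF U sign] by linarith
  qed
qed

lemma stokes_z_nonzero_if_stokes_close:
  assumes U: "U0\<^sup>2 + U1\<^sup>2 = 1" and "U0\<^sup>2 \<noteq> U1\<^sup>2"
  obtains \<eta> where "\<eta> > 0" and "\<And>p. stokes_deviation U0 U1 p < \<eta>\<^sup>2 \<Longrightarrow> stokes_z p \<noteq> 0"
proof -
  define zsq where "zsq v = (fst v)\<^sup>2 - (fst (snd v))\<^sup>2 - (snd (snd v))\<^sup>2" for v :: "real \<times> real \<times> real"
  have "(2 * U0 * U1)\<^sup>2 + (U0\<^sup>2 - U1\<^sup>2)\<^sup>2 = (U0\<^sup>2 + U1\<^sup>2)\<^sup>2"
    by (simp add: power2_eq_square algebra_simps)
  then have "(2 * U0 * U1)\<^sup>2 + (U0\<^sup>2 - U1\<^sup>2)\<^sup>2 = 1"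
    using U by simp
  moreover have "(U0\<^sup>2 - U1\<^sup>2)\<^sup>2 > 0"
    using assms(2) by simp
  moreover have "zsq (1, 2 * U0 * U1, 0) = 1 - (2 * U0 * U1)\<^sup>2"
    by (simp add: zsq_def)
  ultimately have "zsq (1, 2 * U0 * U1, 0) > 0"
    by linarith
  moreover have "isCont zsq (1, 2 * U0 * U1, 0)"
    unfolding zsq_def[abs_def] by (intro continuous_intros)
  note isCont_eventually_greater[OF this, of 0]
  ultimately obtain \<eta> where "\<eta> > 0" and \<eta>: "\<And>v. dist v (1, 2 * U0 * U1, 0) < \<eta> \<Longrightarrow> zsq v > 0"
    unfolding eventually_nhds_metric by blast
  show ?thesis
  proof (rule that[OF \<open>\<eta> > 0\<close>])
    fix p
    assume "stokes_deviation U0 U1 p < \<eta>\<^sup>2"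
    then have "dist (mass p, stokes_x p, stokes_y p) (1, 2 * U0 * U1, 0) < \<eta>"
      unfolding dist_stokes_reference using \<open>\<eta> > 0\<close> by (intro real_less_lsqrt) auto
    then have "zsq (mass p, stokes_x p, stokes_y p) > 0"
      by (rule \<eta>)
    then show "stokes_z p \<noteq> 0"
      using stokes_sum_sq[of p] by (auto simp: zsq_def)
  qed
qed

lemma orbit_distance_small_along_solution:
  assumes U: "U0\<^sup>2 + U1\<^sup>2 = 1" and "\<epsilon> > 0"
  obtains \<eta> where "\<eta> > 0"
    and "\<And>u t. solves_H \<kappa> u \<Longrightarrow> (\<And>s. stokes_deviation U0 U1 (u s) < \<eta>\<^sup>2) \<Longrightarrow>
      (U0\<^sup>2 - U1\<^sup>2) * stokes_z (u 0) \<ge> 0 \<Longrightarrow> 0 \<le> t \<Longrightarrow>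
      (INF \<theta>. norm (u t - (cis \<theta> * fst (cvec (U0, U1)), cis \<theta> * snd (cvec (U0, U1))))) < \<epsilon>"
proof -
  obtain \<eta>1 where "\<eta>1 > 0" and close: "\<And>p. stokes_deviation U0 U1 p < \<eta>1\<^sup>2 \<Longrightarrow>
      (U0\<^sup>2 - U1\<^sup>2) * stokes_z p \<ge> 0 \<Longrightarrow>
      (INF \<theta>. norm (p - (cis \<theta> * fst (cvec (U0, U1)), cis \<theta> * snd (cvec (U0, U1))))) < \<epsilon>"
    using orbit_distance_small_if_stokes_close[OF U \<open>\<epsilon> > 0\<close>] by blast
  obtain \<eta>2 where "\<eta>2 > 0"
    and nonzero: "\<And>p. U0\<^sup>2 \<noteq> U1\<^sup>2 \<Longrightarrow> stokes_deviation U0 U1 p < \<eta>2\<^sup>2 \<Longrightarrow> stokes_z p \<noteq> 0"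
  proof (cases "U0\<^sup>2 = U1\<^sup>2")
    case False
    then obtain \<eta> where "\<eta> > 0" and "\<And>p. stokes_deviation U0 U1 p < \<eta>\<^sup>2 \<Longrightarrow> stokes_z p \<noteq> 0"
      using stokes_z_nonzero_if_stokes_close[OF U False] by blast
    then show ?thesis
      using that by blast
  qed (use that[of 1] in simp)
  show ?thesis
  proof (rule that[of "min \<eta>1 \<eta>2"])
    show "min \<eta>1 \<eta>2 > 0"
      using \<open>\<eta>1 > 0\<close> \<open>\<eta>2 > 0\<close> by simp
    fix u and t :: real
    assume sol: "solves_H \<kappa> u" and deviation: "\<And>s. stokes_deviation U0 U1 (u s) < (min \<eta>1 \<eta>2)\<^sup>2"
      and sign: "(U0\<^sup>2 - U1\<^sup>2) * stokes_z (u 0) \<ge> 0" and "0 \<le> t"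
    have "(min \<eta>1 \<eta>2)\<^sup>2 \<le> \<eta>1\<^sup>2" "(min \<eta>1 \<eta>2)\<^sup>2 \<le> \<eta>2\<^sup>2"
      using \<open>\<eta>1 > 0\<close> \<open>\<eta>2 > 0\<close> by (simp_all add: power_mono)
    then have close_s: "stokes_deviation U0 U1 (u s) < \<eta>1\<^sup>2" "stokes_deviation U0 U1 (u s) < \<eta>2\<^sup>2" for s
      using deviation[of s] by linarith+
    have "(U0\<^sup>2 - U1\<^sup>2) * stokes_z (u t) \<ge> 0"
    proof (cases "U0\<^sup>2 = U1\<^sup>2")
      case False
      then have "stokes_z (u t) * stokes_z (u 0) > 0" and "stokes_z (u 0) \<noteq> 0"
        using solves_H_stokes_z_keeps_sign[OF sol nonzero[OF False close_s(2)] \<open>0 \<le> t\<close>]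
          nonzero[OF False close_s(2)] by blast+
      with sign show ?thesis
        by (auto simp: zero_less_mult_iff zero_le_mult_iff)
    qed simp
    then show "(INF \<theta>. norm (u t - (cis \<theta> * fst (cvec (U0, U1)), cis \<theta> * snd (cvec (U0, U1))))) < \<epsilon>"
      using close[OF close_s(1)] by blast
  qed
qed

lemma orbitally_stable_if_stokes_bound:
  fixes Q :: "complex \<times> complex \<Rightarrow> real" and P :: "complex \<times> complex \<Rightarrow> bool"
  assumes U: "U0\<^sup>2 + U1\<^sup>2 = 1"
    and Q: "isCont Q (cvec (U0, U1))" "Q (cvec (U0, U1)) = 0"
    and P: "eventually P (nhds (cvec (U0, U1)))"
    and bound: "\<And>u t. solves_H \<kappa> u \<Longrightarrow> P (u 0) \<Longrightarrow> stokes_deviation U0 U1 (u t) \<le> Q (u 0)"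
  shows "orbitally_stable \<kappa> (U0, U1)"
  unfolding orbitally_stable_def
proof (intro allI impI)
  fix \<epsilon> :: real
  assume "\<epsilon> > 0"
  define zU where "zU = U0\<^sup>2 - U1\<^sup>2"
  obtain \<eta> where "\<eta> > 0" and small: "\<And>u t. solves_H \<kappa> u \<Longrightarrow> (\<And>s. stokes_deviation U0 U1 (u s) < \<eta>\<^sup>2) \<Longrightarrow>
      zU * stokes_z (u 0) \<ge> 0 \<Longrightarrow> 0 \<le> t \<Longrightarrow>
      (INF \<theta>. norm (u t - (cis \<theta> * fst (cvec (U0, U1)), cis \<theta> * snd (cvec (U0, U1))))) < \<epsilon>"
    using orbit_distance_small_along_solution[OF U \<open>\<epsilon> > 0\<close>, folded zU_def] by blast
  have "zU * stokes_z (cvec (U0, U1)) = zU\<^sup>2"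
    by (simp add: zU_def stokes_cvec power2_eq_square)
  moreover have "isCont (\<lambda>p. zU * stokes_z p) (cvec (U0, U1))"
    by (intro continuous_intros)
  note isCont_eventually_greater[OF this, of 0]
  ultimately have "eventually (\<lambda>p. zU * stokes_z p \<ge> 0) (nhds (cvec (U0, U1)))"
    by (cases "zU = 0") (auto elim: eventually_mono)
  moreover have "eventually (\<lambda>p. Q p < \<eta>\<^sup>2) (nhds (cvec (U0, U1)))"
    using isCont_eventually_less[OF Q(1)] Q(2) \<open>\<eta> > 0\<close> by simp
  ultimately have "eventually (\<lambda>p. Q p < \<eta>\<^sup>2 \<and> P p \<and> zU * stokes_z p \<ge> 0) (nhds (cvec (U0, U1)))"
    using P by eventually_elim blast
  then obtain \<delta> where "\<delta> > 0"
    and \<delta>: "\<And>p. dist p (cvec (U0, U1)) < \<delta> \<Longrightarrow> Q p < \<eta>\<^sup>2 \<and> P p \<and> zU * stokes_z p \<ge> 0"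
    unfolding eventually_nhds_metric by blast
  show "\<exists>\<delta>>0. \<forall>u. solves_H \<kappa> u \<and> norm (u 0 - cvec (U0, U1)) \<le> \<delta> \<longrightarrow>
      (\<forall>t\<ge>0. (INF \<theta>. norm (u t - (cis \<theta> * fst (cvec (U0, U1)), cis \<theta> * snd (cvec (U0, U1))))) \<le> \<epsilon>)"
  proof (intro exI[of _ "\<delta> / 2"] conjI allI impI; (elim conjE)?)
    fix u and t :: real
    assume sol: "solves_H \<kappa> u" and "norm (u 0 - cvec (U0, U1)) \<le> \<delta> / 2" and "0 \<le> t"
    then have u0: "Q (u 0) < \<eta>\<^sup>2" "P (u 0)" "zU * stokes_z (u 0) \<ge> 0"
      using \<delta>[of "u 0"] \<open>\<delta> > 0\<close> by (auto simp: dist_norm)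
    have "stokes_deviation U0 U1 (u s) < \<eta>\<^sup>2" for s
      using bound[OF sol u0(2), of s] u0(1) by linarith
    then show "(INF \<theta>. norm (u t - (cis \<theta> * fst (cvec (U0, U1)), cis \<theta> * snd (cvec (U0, U1))))) \<le> \<epsilon>"
      using small[OF sol _ u0(3) \<open>0 \<le> t\<close>] by fastforce
  qed (use \<open>\<delta> > 0\<close> in simp)
qed

section \<open>Spectral stability\<close>

lemma vector_4 [simp]:
  "(vector [x, y, z, w] :: 'a::zero^4) $ 1 = x"
  "(vector [x, y, z, w] :: 'a::zero^4) $ 2 = y"
  "(vector [x, y, z, w] :: 'a::zero^4) $ 3 = z"
  "(vector [x, y, z, w] :: 'a::zero^4) $ 4 = w"
  unfolding vector_def by simp_all

lemma linL_complex_action: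
  fixes \<kappa> \<omega> U0 U1 :: real and v :: "complex^4"
  defines "M \<equiv> map_matrix complex_of_real (linL \<kappa> \<omega> (U0, U1))"
  shows "(M *v v) $ 1 = of_real (1 + \<omega> - \<kappa> * U0\<^sup>2) * v $ 2 - v $ 4"
    and "(M *v v) $ 2 = - of_real (1 + \<omega> - 3 * \<kappa> * U0\<^sup>2) * v $ 1 + v $ 3"
    and "(M *v v) $ 3 = - v $ 2 + of_real (1 + \<omega> - \<kappa> * U1\<^sup>2) * v $ 4"
    and "(M *v v) $ 4 = v $ 1 - of_real (1 + \<omega> - 3 * \<kappa> * U1\<^sup>2) * v $ 3"
  unfolding M_def
  by (simp_all add: matrix_vector_mult_def sum_4 linL_def matrix_def to_X_def from_X_def
      lin_rhs_def axis_def algebra_simps)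

lemma Re_eq_0_if_square_nonpos_real:
  fixes \<mu> :: complex
  assumes "\<mu>\<^sup>2 = of_real r" and "r \<le> 0"
  shows "Re \<mu> = 0"
proof (rule ccontr)
  assume "Re \<mu> \<noteq> 0"
  moreover have "2 * Re \<mu> * Im \<mu> = 0" and "(Re \<mu>)\<^sup>2 - (Im \<mu>)\<^sup>2 = r"
    using arg_cong[OF assms(1), of Im] arg_cong[OF assms(1), of Re] by (auto simp: power2_eq_square)
  ultimately show False
    using assms(2) not_real_square_gt_zero[of "Re \<mu>"] by (simp add: power2_eq_square)
qed

text \<open>In the eigenvalue equation of the linearization, \<open>a0 * a1 = 1\<close> is the zero mode generated by the
  phase symmetry; it makes \<open>\<mu>\<^sup>2 (\<mu>\<^sup>2 + T) = 0\<close> the equation for \<open>\<mu>\<^sup>2\<close>.\<close>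

lemma Re_eigenvalue_eq_0:
  fixes a0 a1 c0 c1 :: real and \<mu> x1 x2 x3 x4 :: complex
  assumes e1: "\<mu> * x1 = of_real a0 * x2 - x4" and e2: "\<mu> * x2 = - of_real c0 * x1 + x3"
    and e3: "\<mu> * x3 = - x2 + of_real a1 * x4" and e4: "\<mu> * x4 = x1 - of_real c1 * x3"
    and nonzero: "(x1, x2, x3, x4) \<noteq> 0"
    and zero_mode: "a0 * a1 = 1" and T: "a0 * c0 + a1 * c1 + 2 \<ge> 0"
  shows "Re \<mu> = 0"
proof (cases "\<mu> = 0")
  case False
  define L where "L = \<mu>\<^sup>2"
  define T where "T = a0 * c0 + a1 * c1 + 2"
  have L1: "L * x1 = - of_real (a0 * c0 + 1) * x1 + of_real (a0 + c1) * x3"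
  proof -
    have "L * x1 = of_real a0 * (\<mu> * x2) - \<mu> * x4"
      by (simp add: L_def power2_eq_square e1 algebra_simps)
    then show ?thesis
      unfolding e2 e4 by (simp add: algebra_simps)
  qed
  have L3: "L * x3 = of_real (c0 + a1) * x1 - of_real (1 + a1 * c1) * x3"
  proof -
    have "L * x3 = - (\<mu> * x2) + of_real a1 * (\<mu> * x4)"
      by (simp add: L_def power2_eq_square e3 algebra_simps)
    then show ?thesis
      unfolding e2 e4 by (simp add: algebra_simps)
  qed
  have "(x1, x3) \<noteq> (0, 0)"
    using nonzero e2 e4 False by (auto simp: zero_prod_def)
  moreover have "(L\<^sup>2 + of_real T * L) * x1 = 0" and "(L\<^sup>2 + of_real T * L) * x3 = 0"
  proof -
    define E1 where "E1 = (of_real (- (a0 * c0 + 1)) - L) * x1 + of_real (a0 + c1) * x3"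
    define E3 where "E3 = of_real (c0 + a1) * x1 + (of_real (- (1 + a1 * c1)) - L) * x3"
    have "E1 = 0" "E3 = 0"
      using L1 L3 by (simp_all add: E1_def E3_def algebra_simps)
    define D where "D = (a0 * a1 - 1) * (c0 * c1 - 1)"
    have "D = 0"
      using zero_mode by (simp add: D_def)
    have "(L\<^sup>2 + of_real T * L + of_real D) * x1
        = (of_real (- (1 + a1 * c1)) - L) * E1 - of_real (a0 + c1) * E3"
      and "(L\<^sup>2 + of_real T * L + of_real D) * x3
        = (of_real (- (a0 * c0 + 1)) - L) * E3 - of_real (c0 + a1) * E1"
      unfolding E1_def E3_def T_def D_def by (simp_all add: algebra_simps power2_eq_square)
    then show "(L\<^sup>2 + of_real T * L) * x1 = 0" "(L\<^sup>2 + of_real T * L) * x3 = 0"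
      using \<open>E1 = 0\<close> \<open>E3 = 0\<close> \<open>D = 0\<close> by simp_all
  qed
  ultimately have "L\<^sup>2 + of_real T * L = 0"
    by auto
  then have "L * (L + of_real T) = 0"
    by (simp add: power2_eq_square algebra_simps)
  then have "L = of_real 0 \<or> L = of_real (- T)"
    by (auto simp: add_eq_0_iff)
  then show ?thesis
    using Re_eq_0_if_square_nonpos_real T unfolding L_def T_def by (metis neg_le_0_iff_le order_refl)
qed simp

lemma spectrally_stable_if_zero_mode:
  assumes zero_mode: "(1 + \<omega> - \<kappa> * U0\<^sup>2) * (1 + \<omega> - \<kappa> * U1\<^sup>2) = 1"
    and T: "(1 + \<omega> - \<kappa> * U0\<^sup>2) * (1 + \<omega> - 3 * \<kappa> * U0\<^sup>2)
        + (1 + \<omega> - \<kappa> * U1\<^sup>2) * (1 + \<omega> - 3 * \<kappa> * U1\<^sup>2) + 2 \<ge> 0"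
  shows "spectrally_stable \<kappa> \<omega> (U0, U1)"
  unfolding spectrally_stable_def eigenvalue_real_matrix_def
proof (intro allI impI, elim exE conjE)
  fix \<mu> and v :: "complex^4"
  assume "v \<noteq> 0" and eigen: "map_matrix complex_of_real (linL \<kappa> \<omega> (U0, U1)) *v v = \<mu> *s v"
  have component: "\<mu> * v $ i = (map_matrix complex_of_real (linL \<kappa> \<omega> (U0, U1)) *v v) $ i" for i
    using eigen by simp
  note action = linL_complex_action[of \<kappa> \<omega> U0 U1 v]
  have "Re \<mu> = 0"
  proof (rule Re_eigenvalue_eq_0[OF _ _ _ _ _ zero_mode T])
    show "\<mu> * v $ 1 = of_real (1 + \<omega> - \<kappa> * U0\<^sup>2) * v $ 2 - v $ 4"
      using component[of 1] action(1) by simp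
    show "\<mu> * v $ 2 = - of_real (1 + \<omega> - 3 * \<kappa> * U0\<^sup>2) * v $ 1 + v $ 3"
      using component[of 2] action(2) by simp
    show "\<mu> * v $ 3 = - v $ 2 + of_real (1 + \<omega> - \<kappa> * U1\<^sup>2) * v $ 4"
      using component[of 3] action(3) by simp
    show "\<mu> * v $ 4 = v $ 1 - of_real (1 + \<omega> - 3 * \<kappa> * U1\<^sup>2) * v $ 3"
      using component[of 4] action(4) by simp
    show "(v $ 1, v $ 2, v $ 3, v $ 4) \<noteq> 0"
      using \<open>v \<noteq> 0\<close> by (auto simp: vec_eq_iff forall_4 zero_prod_def)
  qed
  then show "Re \<mu> \<le> 0"
    by simp
qed

lemma inv_sqrt2_sq: "(1 / sqrt 2)\<^sup>2 = (1 / 2 :: real)" "(- 1 / sqrt 2)\<^sup>2 = (1 / 2 :: real)"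
  by (simp_all add: power_divide)

lemma inv_sqrt2_prod: "2 * (1 / sqrt 2) * (- 1 / sqrt 2) = (- 1 :: real)" "2 * (1 / sqrt 2) * (1 / sqrt 2) = (1 :: real)"
  by (simp_all add: field_simps)

lemma alpha_beta:
  assumes "\<kappa> > 2" and "\<tau> \<in> {1, -1}"
  shows "(alpha \<kappa> \<tau>)\<^sup>2 + (beta \<kappa> \<tau>)\<^sup>2 = 1" and "alpha \<kappa> \<tau> * beta \<kappa> \<tau> = 1 / \<kappa>"
proof -
  define a b s where "a = sqrt (\<kappa> + 2)" and "b = sqrt (\<kappa> - 2)" and "s = sqrt \<kappa>"
  have \<tau>: "\<tau>\<^sup>2 = 1"
    using assms(2) by auto
  have squares: "a\<^sup>2 = \<kappa> + 2" "b\<^sup>2 = \<kappa> - 2" "s\<^sup>2 = \<kappa>"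
    using assms(1) by (simp_all add: a_def b_def s_def)
  have alpha: "alpha \<kappa> \<tau> = (a - \<tau> * b) / (2 * s)" and beta: "beta \<kappa> \<tau> = (a + \<tau> * b) / (2 * s)"
    by (simp_all add: alpha_def beta_def a_def b_def s_def)
  have "(alpha \<kappa> \<tau>)\<^sup>2 + (beta \<kappa> \<tau>)\<^sup>2 = (2 * a\<^sup>2 + 2 * \<tau>\<^sup>2 * b\<^sup>2) / (4 * s\<^sup>2)"
    unfolding alpha beta power_divide by (simp add: power2_eq_square flip: add_divide_distrib) (simp add: algebra_simps)
  also have "\<dots> = 1"
    using assms(1) unfolding squares \<tau> by simp
  finally show "(alpha \<kappa> \<tau>)\<^sup>2 + (beta \<kappa> \<tau>)\<^sup>2 = 1" .
  have "alpha \<kappa> \<tau> * beta \<kappa> \<tau> = (a\<^sup>2 - \<tau>\<^sup>2 * b\<^sup>2) / (4 * s\<^sup>2)"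
    unfolding alpha beta by (simp add: power2_eq_square algebra_simps)
  also have "\<dots> = 1 / \<kappa>"
    using assms(1) unfolding squares \<tau> by simp
  finally show "alpha \<kappa> \<tau> * beta \<kappa> \<tau> = 1 / \<kappa>" .
qed

lemma spectrally_stable_antisymmetric:
  "\<kappa> > 0 \<Longrightarrow> spectrally_stable \<kappa> (\<kappa> / 2 - 2) (1 / sqrt 2, - 1 / sqrt 2)"
  by (rule spectrally_stable_if_zero_mode) (simp_all add: inv_sqrt2_sq algebra_simps)

lemma spectrally_stable_symmetric:
  "\<kappa> > 0 \<Longrightarrow> \<kappa> < 2 \<Longrightarrow> spectrally_stable \<kappa> (\<kappa> / 2) (1 / sqrt 2, 1 / sqrt 2)"
  by (rule spectrally_stable_if_zero_mode) (simp_all add: inv_sqrt2_sq algebra_simps)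

lemma spectrally_stable_asymmetric:
  assumes "\<kappa> > 2" and "\<tau> \<in> {1, -1}"
  shows "spectrally_stable \<kappa> (\<kappa> - 1) (alpha \<kappa> \<tau>, beta \<kappa> \<tau>)"
proof (rule spectrally_stable_if_zero_mode)
  define A B where "A = (alpha \<kappa> \<tau>)\<^sup>2" and "B = (beta \<kappa> \<tau>)\<^sup>2"
  have sum: "A + B = 1" and prod: "\<kappa>\<^sup>2 * (A * B) = 1"
    using alpha_beta[OF assms] assms(1)
    by (simp_all add: A_def B_def power_mult_distrib[symmetric] power_divide)
  have "(\<kappa> - \<kappa> * A) * (\<kappa> - \<kappa> * B) = \<kappa>\<^sup>2 * (A * B) + \<kappa>\<^sup>2 * (1 - A - B)"
    by (simp add: algebra_simps power2_eq_square)
  then show "(1 + (\<kappa> - 1) - \<kappa> * (alpha \<kappa> \<tau>)\<^sup>2) * (1 + (\<kappa> - 1) - \<kappa> * (beta \<kappa> \<tau>)\<^sup>2) = 1"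
    using sum prod by (simp add: A_def B_def)
  have "(\<kappa> - \<kappa> * A) * (\<kappa> - 3 * \<kappa> * A) + (\<kappa> - \<kappa> * B) * (\<kappa> - 3 * \<kappa> * B) + 2
      = \<kappa>\<^sup>2 * (2 - 4 * (A + B) + 3 * (A + B)\<^sup>2) - 6 * (\<kappa>\<^sup>2 * (A * B)) + 2"
    by (simp add: algebra_simps power2_eq_square)
  also have "\<dots> = (\<kappa> - 2) * (\<kappa> + 2)"
    using sum prod by (simp add: power2_eq_square algebra_simps)
  finally show "0 \<le> (1 + (\<kappa> - 1) - \<kappa> * (alpha \<kappa> \<tau>)\<^sup>2) * (1 + (\<kappa> - 1) - 3 * \<kappa> * (alpha \<kappa> \<tau>)\<^sup>2)
      + (1 + (\<kappa> - 1) - \<kappa> * (beta \<kappa> \<tau>)\<^sup>2) * (1 + (\<kappa> - 1) - 3 * \<kappa> * (beta \<kappa> \<tau>)\<^sup>2) + 2"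
    using assms(1) by (simp add: A_def B_def)
qed

section \<open>Orbital stability of the three families\<close>

lemma stokes_cone_bounds:
  fixes N X Y Z :: real
  assumes cone: "X\<^sup>2 + Y\<^sup>2 + Z\<^sup>2 = N\<^sup>2" and "N \<ge> 0"
  shows "\<bar>X\<bar> \<le> N" and "Y\<^sup>2 \<le> (N - X) * (N + X)" and "Z\<^sup>2 \<le> (N - X) * (N + X)"
proof -
  have "(N - X) * (N + X) = Y\<^sup>2 + Z\<^sup>2"
    using cone by (simp add: power2_eq_square algebra_simps)
  then show "Y\<^sup>2 \<le> (N - X) * (N + X)" and "Z\<^sup>2 \<le> (N - X) * (N + X)"
    by simp_all
  have "X\<^sup>2 \<le> N\<^sup>2"
    using cone zero_le_power2[of Y] zero_le_power2[of Z] by linarith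
  then show "\<bar>X\<bar> \<le> N"
    using \<open>N \<ge> 0\<close> by (simp add: power2_le_iff_abs_le)
qed

text \<open>On the cone \<open>X\<^sup>2 + Y\<^sup>2 + Z\<^sup>2 = N\<^sup>2\<close> the quantity \<open>X + \<kappa> Z\<^sup>2/4 + N\<close> (energy plus mass) is
  nonnegative and vanishes only at \<open>X = - N\<close>, \<open>Z = 0\<close>.\<close>

lemma stokes_deviation_le_antisymmetric:
  fixes N X Y Z \<kappa> :: real
  assumes cone: "X\<^sup>2 + Y\<^sup>2 + Z\<^sup>2 = N\<^sup>2" and "N \<ge> 0" and "\<kappa> \<ge> 0"
  defines "C \<equiv> X + \<kappa> * Z\<^sup>2 / 4 + N"
  shows "(N - 1)\<^sup>2 + (X + 1)\<^sup>2 + Y\<^sup>2 \<le> 3 * (N - 1)\<^sup>2 + 2 * C\<^sup>2 + 2 * N * C"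
proof -
  note bounds = stokes_cone_bounds[OF cone \<open>N \<ge> 0\<close>]
  then have XN: "0 \<le> X + N" "X + N \<le> C"
    using \<open>\<kappa> \<ge> 0\<close> by (auto simp: C_def)
  have "Y\<^sup>2 \<le> (N - X) * (N + X)"
    by (fact bounds(2))
  also have "\<dots> \<le> (2 * N) * C"
    using bounds(1) XN by (intro mult_mono) auto
  finally have "Y\<^sup>2 \<le> 2 * N * C" .
  moreover have "(X + 1)\<^sup>2 \<le> 2 * (X + N)\<^sup>2 + 2 * (N - 1)\<^sup>2"
    using zero_le_power2[of "X + 2 * N - 1"] by (simp add: power2_eq_square algebra_simps)
  moreover have "(X + N)\<^sup>2 \<le> C\<^sup>2"
    using XN by (simp add: power_mono)
  ultimately show ?thesis
    by linarith
qed

text \<open>Here mass minus energy is at least \<open>(N - X) (1 - \<kappa> N / 2)\<close>, which controls \<open>N - X\<close> as long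
  as \<open>N < 1/2 + 1/\<kappa>\<close>.\<close>

lemma stokes_deviation_le_symmetric:
  fixes N X Y Z \<kappa> :: real
  assumes cone: "X\<^sup>2 + Y\<^sup>2 + Z\<^sup>2 = N\<^sup>2" and "N \<ge> 0" and "0 < \<kappa>" "\<kappa> < 2" and N: "N < 1 / 2 + 1 / \<kappa>"
  defines "D \<equiv> (N - (X + \<kappa> * Z\<^sup>2 / 4)) / ((2 - \<kappa>) / 4)"
  shows "(N - 1)\<^sup>2 + (X - 1)\<^sup>2 + Y\<^sup>2 \<le> 3 * (N - 1)\<^sup>2 + 2 * D\<^sup>2 + 2 * N * D"
proof -
  define e where "e = N - X"
  note bounds = stokes_cone_bounds[OF cone \<open>N \<ge> 0\<close>, folded e_def]
  then have "e \<ge> 0"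
    by (auto simp: e_def)
  have "e * (N + X) \<le> e * (2 * N)"
    using \<open>e \<ge> 0\<close> bounds(1) by (intro mult_left_mono) auto
  then have Y: "Y\<^sup>2 \<le> e * (2 * N)" and Z: "\<kappa> * Z\<^sup>2 \<le> \<kappa> * (e * (2 * N))"
    using bounds(2,3) \<open>0 < \<kappa>\<close> by (auto intro: mult_left_mono)
  have "e * ((2 - \<kappa>) / 4) \<le> e * (1 - \<kappa> * N / 2)"
    using \<open>e \<ge> 0\<close> N \<open>0 < \<kappa>\<close> by (intro mult_left_mono) (simp_all add: field_simps)
  also have "\<dots> = N - X - \<kappa> * (e * (2 * N)) / 4"
    by (simp add: e_def field_simps)
  also have "\<dots> \<le> N - (X + \<kappa> * Z\<^sup>2 / 4)"
    using Z by linarith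
  finally have "e \<le> D"
    using \<open>\<kappa> < 2\<close> by (simp add: D_def pos_le_divide_eq)
  have "Y\<^sup>2 \<le> e * (2 * N)"
    by (fact Y)
  also have "\<dots> \<le> D * (2 * N)"
    using \<open>e \<le> D\<close> \<open>N \<ge> 0\<close> by (intro mult_right_mono) auto
  finally have "Y\<^sup>2 \<le> 2 * N * D"
    by (simp add: algebra_simps)
  moreover have "(X - 1)\<^sup>2 \<le> 2 * (N - 1)\<^sup>2 + 2 * e\<^sup>2"
    using zero_le_power2[of "N - 1 + e"] by (simp add: e_def power2_eq_square algebra_simps)
  moreover have "e\<^sup>2 \<le> D\<^sup>2"
    using \<open>e \<ge> 0\<close> \<open>e \<le> D\<close> by (simp add: power_mono)
  ultimately show ?thesis
    by linarith
qed

lemma stokes_deviation_eq_asymmetric: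
  fixes N X Y Z \<kappa> :: real
  assumes "X\<^sup>2 + Y\<^sup>2 + Z\<^sup>2 = N\<^sup>2" and "\<kappa> > 0"
  shows "(N - 1)\<^sup>2 + (X - 2 / \<kappa>)\<^sup>2 + Y\<^sup>2 = (N - 1)\<^sup>2 + 4 / \<kappa> * (1 / \<kappa> + \<kappa> * N\<^sup>2 / 4 - (X + \<kappa> * Z\<^sup>2 / 4))"
proof -
  have Z: "Z\<^sup>2 = N\<^sup>2 - X\<^sup>2 - Y\<^sup>2"
    using assms(1) by simp
  show ?thesis
    unfolding Z using assms(2) by (simp add: field_simps power2_eq_square)
qed

lemma orbitally_stable_antisymmetric:
  assumes "\<kappa> > 0"
  shows "orbitally_stable \<kappa> (1 / sqrt 2, - 1 / sqrt 2)"
proof -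
  define C where "C p = energy \<kappa> p + mass p" for p
  define Q where "Q p = 3 * (mass p - 1)\<^sup>2 + 2 * (C p)\<^sup>2 + 2 * mass p * C p" for p
  show ?thesis
  proof (rule orbitally_stable_if_stokes_bound[where Q = Q and P = "\<lambda>_. True"])
    show "isCont Q (cvec (1 / sqrt 2, - 1 / sqrt 2))"
      unfolding Q_def[abs_def] C_def energy_def by (intro continuous_intros) simp_all
    show "Q (cvec (1 / sqrt 2, - 1 / sqrt 2)) = 0"
      by (simp add: Q_def C_def energy_def stokes_cvec inv_sqrt2_sq inv_sqrt2_prod)
    fix u t
    assume "solves_H \<kappa> u"
    have "stokes_deviation (1 / sqrt 2) (- 1 / sqrt 2) (u t) \<le> Q (u t)"
      using stokes_deviation_le_antisymmetric[OF stokes_sum_sq[of "u t"] mass_nonneg less_imp_le[OF assms]]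
      by (simp add: stokes_deviation_def inv_sqrt2_prod Q_def C_def energy_def add_ac)
    also have "\<dots> = Q (u 0)"
      using solves_H_conservation[OF \<open>solves_H \<kappa> u\<close>, of t] by (simp add: Q_def C_def)
    finally show "stokes_deviation (1 / sqrt 2) (- 1 / sqrt 2) (u t) \<le> Q (u 0)" .
  qed (simp_all add: inv_sqrt2_sq)
qed

lemma orbitally_stable_symmetric:
  assumes "0 < \<kappa>" "\<kappa> < 2"
  shows "orbitally_stable \<kappa> (1 / sqrt 2, 1 / sqrt 2)"
proof -
  define D where "D p = (mass p - energy \<kappa> p) / ((2 - \<kappa>) / 4)" for p
  define Q where "Q p = 3 * (mass p - 1)\<^sup>2 + 2 * (D p)\<^sup>2 + 2 * mass p * D p" for p
  show ?thesis
  proof (rule orbitally_stable_if_stokes_bound[where Q = Q and P = "\<lambda>p. mass p < 1 / 2 + 1 / \<kappa>"])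
    show "isCont Q (cvec (1 / sqrt 2, 1 / sqrt 2))"
      unfolding Q_def[abs_def] D_def energy_def by (intro continuous_intros) (use assms in simp_all)
    show "Q (cvec (1 / sqrt 2, 1 / sqrt 2)) = 0"
      by (simp add: Q_def D_def energy_def stokes_cvec inv_sqrt2_sq inv_sqrt2_prod)
    have "isCont mass (cvec (1 / sqrt 2, 1 / sqrt 2))"
      by (intro continuous_intros)
    moreover have "mass (cvec (1 / sqrt 2, 1 / sqrt 2)) < 1 / 2 + 1 / \<kappa>"
      using assms by (simp add: stokes_cvec inv_sqrt2_sq field_simps)
    ultimately show "eventually (\<lambda>p. mass p < 1 / 2 + 1 / \<kappa>) (nhds (cvec (1 / sqrt 2, 1 / sqrt 2)))"
      by (rule isCont_eventually_less)
    fix u t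
    assume "solves_H \<kappa> u" and "mass (u 0) < 1 / 2 + 1 / \<kappa>"
    then have "mass (u t) < 1 / 2 + 1 / \<kappa>"
      using solves_H_conservation by metis
    then have "stokes_deviation (1 / sqrt 2) (1 / sqrt 2) (u t) \<le> Q (u t)"
      using stokes_deviation_le_symmetric[OF stokes_sum_sq[of "u t"] mass_nonneg assms]
      by (simp add: stokes_deviation_def inv_sqrt2_prod Q_def D_def energy_def)
    also have "\<dots> = Q (u 0)"
      using solves_H_conservation[OF \<open>solves_H \<kappa> u\<close>, of t] by (simp add: Q_def D_def)
    finally show "stokes_deviation (1 / sqrt 2) (1 / sqrt 2) (u t) \<le> Q (u 0)" .
  qed (simp add: inv_sqrt2_sq)
qed

lemma orbitally_stable_asymmetric:
  assumes "\<kappa> > 2" and "\<tau> \<in> {1, -1}"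
  shows "orbitally_stable \<kappa> (alpha \<kappa> \<tau>, beta \<kappa> \<tau>)"
proof -
  note ab = alpha_beta[OF assms]
  have "\<kappa> > 0"
    using assms(1) by simp
  have conserved: "stokes_deviation (alpha \<kappa> \<tau>) (beta \<kappa> \<tau>) p
      = (mass p - 1)\<^sup>2 + 4 / \<kappa> * (1 / \<kappa> + \<kappa> * (mass p)\<^sup>2 / 4 - energy \<kappa> p)" for p
    using stokes_deviation_eq_asymmetric[OF stokes_sum_sq[of p] \<open>\<kappa> > 0\<close>] ab(2)
    by (simp add: stokes_deviation_def energy_def mult.assoc)
  show ?thesis
  proof (rule orbitally_stable_if_stokes_bound[where Q = "stokes_deviation (alpha \<kappa> \<tau>) (beta \<kappa> \<tau>)"
        and P = "\<lambda>_. True"])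
    show "isCont (stokes_deviation (alpha \<kappa> \<tau>) (beta \<kappa> \<tau>)) (cvec (alpha \<kappa> \<tau>, beta \<kappa> \<tau>))"
      unfolding stokes_deviation_def[abs_def] by (intro continuous_intros)
    show "stokes_deviation (alpha \<kappa> \<tau>) (beta \<kappa> \<tau>) (u t) \<le> stokes_deviation (alpha \<kappa> \<tau>) (beta \<kappa> \<tau>) (u 0)"
      if "solves_H \<kappa> u" for u t
      using solves_H_conservation[OF that, of t] by (simp add: conserved)
  qed (simp_all add: ab stokes_deviation_def stokes_cvec)
qed

theorem mainTheorem1:
  fixes \<kappa> :: real
  assumes "\<kappa> > 0"
  shows "(spectrally_stable \<kappa> (\<kappa>/2 - 2) (1 / sqrt 2, - 1 / sqrt 2)
            \<and> orbitally_stable \<kappa> (1 / sqrt 2, - 1 / sqrt 2))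
       \<and> (\<kappa> < 2 \<longrightarrow> spectrally_stable \<kappa> (\<kappa>/2) (1 / sqrt 2, 1 / sqrt 2)
            \<and> orbitally_stable \<kappa> (1 / sqrt 2, 1 / sqrt 2))
       \<and> (\<kappa> > 2 \<longrightarrow> (\<forall>\<tau>\<in>{1, -1::real}.
            spectrally_stable \<kappa> (\<kappa> - 1) (alpha \<kappa> \<tau>, beta \<kappa> \<tau>)
            \<and> orbitally_stable \<kappa> (alpha \<kappa> \<tau>, beta \<kappa> \<tau>)))"
  using assms spectrally_stable_antisymmetric orbitally_stable_antisymmetric
    spectrally_stable_symmetric orbitally_stable_symmetric
    spectrally_stable_asymmetric orbitally_stable_asymmetric
  by blast

thm_deps mainTheorem1

end
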